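(* Let $\mathbf{X},\mathbf{Y},\mathbf{Z}$ be finite non-empty sets, $N\ge1$ fixed, and let $(X_n,Y_n,Z_n)$, $n=1,\dots,N$, be random elements of $\mathbf{X}\times\mathbf{Y}\times\mathbf{Z}$ on a common probability space. Suppose there are a probability distribution $\pi$ on $\mathbf{Z}$ and probability distributions $q(\cdot\mid x,z)$ on $\mathbf{Y}$, $(x,z)\in\mathbf{X}\times\mathbf{Z}$, such that for every $n\in[N]$, writing $\mathcal{H}_{n-1}:=\sigma\bigl((X_i,Y_i,Z_i):i<n\bigr)$: (i) conditionally on $\mathcal{H}_{n-1}$, $Z_n$ has distribution $\pi$; (ii) the conditional distribution of $X_n$ given $\mathcal{H}_{n-1}$ and $Z_n$ is arbitrary; (iii) conditionally on $\sigma(\mathcal{H}_{n-1},Z_n,X_n)$, $Y_n$ has distribution $q(\cdot\mid X_n,Z_n)$. Fix $\delta>0$, $\tilde x\in\mathbf{X}$, $y\in\mathbf{Y}$, and let $P(y\mid\mathrm{do}(\tilde x)):=\sum_{z\in\mathbf{Z}}q(y\mid\tilde x,z)\pi(z)$. Let \[ m:=\sum_{z\in\mathbf{Z}}\hat p(z)\,\check p(y\mid\tilde x,z),\qquad h:=|\mathbf{Z}|\sqrt{\frac{\ln\frac{4|\mathbf{Z}|}{\delta}}{2N}}+\sum_{z\in\mathbf{Z}}\sqrt{\frac{2\ln\log_2\lfloor\!\lfloor\#\tilde x z\rfloor\!\rfloor+\ln\frac{6.6|\mathbf{Z}|}{\delta}}{2\lfloor\!\lfloor\#\tilde x z\rfloor\!\rfloor}},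 \] with the convention $\ln\log_2 1:=\infty$ (so $h=\infty$ unless $\#\tilde x z\ge2$ for all $z$). Then $\mathbb{P}\bigl(P(y\mid\mathrm{do}(\tilde x))\in[m-h,m+h]\bigr)\ge1-\delta$.
   Context: This models the "strong interpretation" of a repeated causal diagram in which $Z$ satisfies the back-door criterion relative to $(X,Y)$: $X_n$ is a decision that may depend on all past observations. Notation: for $m\le N$, $\#_m \tilde x z:=|\{n\in[m]:(X_n,Z_n)=(\tilde x,z)\}|$, $\#\tilde x z:=\#_N\tilde x z$, $\#z:=|\{n\in[N]:Z_n=z\}|$, $\hat p(z):=\#z/N$. For an integer $n\ge2$, $\lfloor\!\lfloor n\rfloor\!\rfloor$ is the largest number of the form $2^k$, $k\in\{1,2,\dots\}$, with $2^k\le n$; for $n<2$, $\lfloor\!\lfloor n\rfloor\!\rfloor:=1$. The estimate \[ \check p(y\mid\tilde x,z):=\frac{|\{n\in[N]:\#_n\tilde x z\le\lfloor\!\lfloor\#\tilde x z\rfloor\!\rfloor,\ X_n=\tilde x,\ Y_n=y,\ Z_n=z\}|}{\lfloor\!\lfloor\#\tilde x z\rfloor\!\rfloor} \] is the fraction of the first $\lfloor\!\lfloor\#\tilde x z\rfloor\!\rfloor$ observations with $(X_n,Z_n)=(\tilde x,z)$ for which $Y_n=y$ (its value is irrelevant when $h=\infty$). *)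

theory Defs
  imports "HOL-Probability.Probability"
begin

definition pow2floor :: "nat \<Rightarrow> nat" where
  "pow2floor n = (if n < 2 then 1 else 2 ^ (GREATEST k. 1 \<le> k \<and> 2 ^ k \<le> n))"

definition cnt :: "(nat \<Rightarrow> 'x) \<Rightarrow> (nat \<Rightarrow> 'z) \<Rightarrow> nat \<Rightarrow> 'x \<Rightarrow> 'z \<Rightarrow> nat" where
  "cnt xs zs m x z = card {n \<in> {1..m}. xs n = x \<and> zs n = z}"

definition phat :: "(nat \<Rightarrow> 'z) \<Rightarrow> nat \<Rightarrow> 'z \<Rightarrow> real" where
  "phat zs N z = real (card {n \<in> {1..N}. zs n = z}) / real N"

definition pcheck :: "(nat \<Rightarrow> 'x) \<Rightarrow> (nat \<Rightarrow> 'y) \<Rightarrow> (nat \<Rightarrow> 'z) \<Rightarrow> nat \<Rightarrow> 'y \<Rightarrow> 'x \<Rightarrow> 'z \<Rightarrow> real" where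
  "pcheck xs ys zs N y x z =
     real (card {n \<in> {1..N}. cnt xs zs n x z \<le> pow2floor (cnt xs zs N x z)
                             \<and> xs n = x \<and> ys n = y \<and> zs n = z})
     / real (pow2floor (cnt xs zs N x z))"

definition m_est :: "(nat \<Rightarrow> 'x) \<Rightarrow> (nat \<Rightarrow> 'y) \<Rightarrow> (nat \<Rightarrow> 'z::finite) \<Rightarrow> nat \<Rightarrow> 'y \<Rightarrow> 'x \<Rightarrow> real" where
  "m_est xs ys zs N y x = (\<Sum>z\<in>UNIV. phat zs N z * pcheck xs ys zs N y x z)"

text \<open>The half-width h, as a real number; it is only meaningful (finite) when
  cnt N x z \<ge> 2 for all z.  Otherwise h = \<infinity> (handled in the statement).\<close>
definition h_est :: "(nat \<Rightarrow> 'x) \<Rightarrow> (nat \<Rightarrow> 'z::finite) \<Rightarrow> nat \<Rightarrow> real \<Rightarrow> 'x \<Rightarrow> real" where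
  "h_est xs zs N \<delta> x =
     real CARD('z) * sqrt (ln (4 * real CARD('z) / \<delta>) / (2 * real N))
     + (\<Sum>z\<in>UNIV. sqrt ((2 * ln (log 2 (real (pow2floor (cnt xs zs N x z))))
                            + ln (6.6 * real CARD('z) / \<delta>))
                           / (2 * real (pow2floor (cnt xs zs N x z)))))"

definition in_ci :: "(nat \<Rightarrow> 'x) \<Rightarrow> (nat \<Rightarrow> 'y) \<Rightarrow> (nat \<Rightarrow> 'z::finite) \<Rightarrow> nat \<Rightarrow> real \<Rightarrow> 'y \<Rightarrow> 'x \<Rightarrow> real \<Rightarrow> bool" where
  "in_ci xs ys zs N \<delta> y x p =
     ((\<exists>z. cnt xs zs N x z < 2) \<or>
      (m_est xs ys zs N y x - h_est xs zs N \<delta> x \<le> p \<and> p \<le> m_est xs ys zs N y x + h_est xs zs N \<delta> x))"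

end

(* Everything is discrete, so the law of the first N observations is a weight function on
   histories, and the hypotheses say that, given the past, Z_n has law pi and Y_n has law
   q(. | X_n, Z_n), whatever the law of X_n.  Hence N (p-hat(z) - pi(z)) and, for each k, the
   number of Y = y among the first 2^k observations with (X, Z) = (x~, z) minus 2^k q(y | x~, z)
   are sums of increments whose conditional moment generating functions obey Hoeffding's lemma;
   by the Azuma-Hoeffding inequality each exceeds its radius with probability at most
   delta / (2 |Z|), resp. delta / (3.3 |Z| k^2).  The sample size 2^k = floor-floor(#x~z) is
   random, which is why every k in [N] enters the union bound; sum 1/k^2 <= 1.65 keeps the total
   at delta.  Outside these events each p-hat(z) and p-check(y | x~, z) is within its radius, and
   m - P(y | do(x~)) = sum_z p-hat(z) (p-check - q) + q (p-hat(z) - pi(z)) is at most h. *)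

theory Submission
  imports Defs
begin

section \<open>Hoeffding's lemma and exponential supermartingales on histories\<close>

lemma hoeffding_lemma_bernoulli:
  fixes p l :: real
  assumes "0 \<le> p" "p \<le> 1"
  shows "p * exp (l * (1 - p)) + (1 - p) * exp (- l * p) \<le> exp (l\<^sup>2 / 8)"
proof -
  have nonneg_case: "p * exp (l * (1 - p)) + (1 - p) * exp (- l * p) \<le> exp (l\<^sup>2 / 8)"
    if "0 \<le> l" "0 \<le> p" "p \<le> 1" for l p :: real
  proof -
    have pos: "0 < 1 + p * (exp l - 1)"
      using that by (intro add_pos_nonneg mult_nonneg_nonneg) auto
    have "p * exp (l * (1 - p)) + (1 - p) * exp (- l * p) = exp (- l * p) * (1 + p * (exp l - 1))"
      by (simp add: algebra_simps exp_add[symmetric])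
    also have "\<dots> = exp (- l * p + ln (1 + p * (exp l - 1)))"
      using pos by (simp add: exp_diff exp_minus field_simps)
    also have "\<dots> \<le> exp (l\<^sup>2 / 8)"
      using Hoeffdings_lemma_aux[of l p] that by simp
    finally show ?thesis .
  qed
  show ?thesis
  proof (cases "0 \<le> l")
    case True
    then show ?thesis using nonneg_case assms by blast
  next
    case False
    then show ?thesis
      using nonneg_case[of "- l" "1 - p"] assms by (simp add: algebra_simps)
  qed
qed

lemma hoeffding_lemma_indicator:
  fixes w :: "'a::finite \<Rightarrow> real"
  assumes nonneg: "\<And>a. 0 \<le> w a" and sum_one: "(\<Sum>a\<in>UNIV. w a) = 1"
  shows "(\<Sum>a\<in>UNIV. w a * exp (l * (of_bool (a = a0) - w a0) - l\<^sup>2 / 8)) \<le> 1"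
proof -
  let ?p = "w a0"
  have rest: "(\<Sum>a\<in>UNIV - {a0}. w a) = 1 - ?p"
    using sum_one sum.remove[of UNIV a0 w] by simp
  have "?p \<le> 1"
    using rest nonneg by (metis diff_ge_0_iff_ge sum_nonneg)
  have "(\<Sum>a\<in>UNIV. w a * exp (l * (of_bool (a = a0) - ?p) - l\<^sup>2 / 8))
      = ?p * exp (l * (1 - ?p) - l\<^sup>2 / 8) + (\<Sum>a\<in>UNIV - {a0}. w a) * exp (- l * ?p - l\<^sup>2 / 8)"
    by (simp add: sum.remove[of UNIV a0] sum_distrib_right)
  also have "\<dots> = exp (- (l\<^sup>2 / 8)) * (?p * exp (l * (1 - ?p)) + (1 - ?p) * exp (- l * ?p))"
  proof -
    have "exp (l * (1 - ?p) - l\<^sup>2 / 8) = exp (- (l\<^sup>2 / 8)) * exp (l * (1 - ?p))"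
      "exp (- l * ?p - l\<^sup>2 / 8) = exp (- (l\<^sup>2 / 8)) * exp (- l * ?p)"
      by (simp_all add: exp_add[symmetric])
    then show ?thesis
      unfolding rest by (simp add: algebra_simps)
  qed
  also have "\<dots> \<le> exp (- (l\<^sup>2 / 8)) * exp (l\<^sup>2 / 8)"
    using hoeffding_lemma_bernoulli[of ?p l] nonneg \<open>?p \<le> 1\<close> by (intro mult_left_mono) auto
  also have "\<dots> = 1"
    by (simp add: exp_minus)
  finally show ?thesis .
qed

definition path_sum :: "('t list \<Rightarrow> 't \<Rightarrow> real) \<Rightarrow> 't list \<Rightarrow> real" where
  "path_sum g h = (\<Sum>j<length h. g (take j h) (h ! j))"

lemma path_sum_Nil [simp]: "path_sum g [] = 0"
  by (simp add: path_sum_def)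

lemma path_sum_snoc [simp]: "path_sum g (h @ [t]) = path_sum g h + g h t"
  by (simp add: path_sum_def nth_append)

lemma finite_lists_length: "finite {h :: 'a::finite list. length h = n}"
  using finite_lists_length_eq[of "UNIV :: 'a set" n] by simp

lemma sum_lists_length_Suc:
  fixes f :: "'a::finite list \<Rightarrow> real"
  shows "(\<Sum>h | length h = Suc n. f h) = (\<Sum>h | length h = n. \<Sum>t\<in>UNIV. f (h @ [t]))"
proof -
  have image: "{h :: 'a list. length h = Suc n} = (\<lambda>(h, t). h @ [t]) ` ({h. length h = n} \<times> UNIV)"
    by (auto simp: image_iff length_Suc_conv_rev)
  have inj: "inj_on (\<lambda>(h, t). h @ [t]) ({h :: 'a list. length h = n} \<times> UNIV)"
    by (auto simp: inj_on_def)
  show ?thesis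
    unfolding image by (subst sum.reindex[OF inj]) (simp add: sum.cartesian_product split_beta)
qed

lemma supermartingale_sum_le:
  fixes p F :: "'t::finite list \<Rightarrow> real"
  assumes step: "\<And>h. length h < N \<Longrightarrow> (\<Sum>t\<in>UNIV. p (h @ [t]) * F (h @ [t])) \<le> p h * F h"
  shows "n \<le> N \<Longrightarrow> (\<Sum>h | length h = n. p h * F h) \<le> p [] * F []"
proof (induction n)
  case 0
  have "{h :: 't list. length h = 0} = {[]}" by auto
  then show ?case by simp
next
  case (Suc n)
  have "(\<Sum>h | length h = Suc n. p h * F h)
      = (\<Sum>h | length h = n. \<Sum>t\<in>UNIV. p (h @ [t]) * F (h @ [t]))"
    by (rule sum_lists_length_Suc)
  also have "\<dots> \<le> (\<Sum>h | length h = n. p h * F h)"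
    using Suc.prems by (intro sum_mono step) auto
  also have "\<dots> \<le> p [] * F []"
    using Suc by simp
  finally show ?case .
qed

lemma exp_supermartingale_tail:
  fixes p d c :: "'t::finite list \<Rightarrow> _" and l r :: real
  assumes nonneg: "\<And>h. 0 \<le> p h"
    and step: "\<And>h. length h < N \<Longrightarrow>
      (\<Sum>t\<in>UNIV. p (h @ [t]) * exp (l * d h t - l\<^sup>2 * c h t / 8)) \<le> p h"
    and E: "E \<subseteq> {h. length h = N}"
    and large: "\<And>h. h \<in> E \<Longrightarrow> r \<le> l * path_sum d h - l\<^sup>2 * path_sum c h / 8"
  shows "(\<Sum>h\<in>E. p h) \<le> p [] * exp (- r)"
proof -
  define F where "F h = exp (l * path_sum d h - l\<^sup>2 * path_sum c h / 8)" for h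
  have F_snoc: "F (h @ [t]) = F h * exp (l * d h t - l\<^sup>2 * c h t / 8)" for h t
    unfolding F_def by (simp add: exp_add[symmetric] algebra_simps add_divide_distrib)
  have "(\<Sum>t\<in>UNIV. p (h @ [t]) * F (h @ [t])) \<le> p h * F h" if "length h < N" for h
  proof -
    have "(\<Sum>t\<in>UNIV. p (h @ [t]) * F (h @ [t]))
        = F h * (\<Sum>t\<in>UNIV. p (h @ [t]) * exp (l * d h t - l\<^sup>2 * c h t / 8))"
      by (simp add: F_snoc sum_distrib_left algebra_simps)
    also have "\<dots> \<le> F h * p h"
      using step[OF that] by (intro mult_left_mono) (auto simp: F_def)
    finally show ?thesis by (simp add: algebra_simps)
  qed
  then have total: "(\<Sum>h | length h = N. p h * F h) \<le> p []"
    using supermartingale_sum_le[of N p F N] by (simp add: F_def)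
  have "(\<Sum>h\<in>E. p h) \<le> (\<Sum>h\<in>E. p h * F h * exp (- r))"
  proof (rule sum_mono)
    fix h assume "h \<in> E"
    then have "1 \<le> F h * exp (- r)"
      using large by (simp add: F_def exp_minus field_simps)
    then show "p h \<le> p h * F h * exp (- r)"
      using mult_left_mono[OF _ nonneg[of h]] by fastforce
  qed
  also have "\<dots> = exp (- r) * (\<Sum>h\<in>E. p h * F h)"
    by (simp add: sum_distrib_left algebra_simps)
  also have "\<dots> \<le> exp (- r) * (\<Sum>h | length h = N. p h * F h)"
    using E nonneg by (intro mult_left_mono sum_mono2 finite_lists_length) (auto simp: F_def)
  also have "\<dots> \<le> p [] * exp (- r)"
    using total by simp
  finally show ?thesis .
qed

theorem azuma_hoeffding_tail:
  fixes p d c :: "'t::finite list \<Rightarrow> _" and n t :: real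
  assumes nonneg: "\<And>h. 0 \<le> p h"
    and step: "\<And>l h. length h < N \<Longrightarrow>
      (\<Sum>t\<in>UNIV. p (h @ [t]) * exp (l * d h t - l\<^sup>2 * c h t / 8)) \<le> p h"
    and bounded: "\<And>h. length h = N \<Longrightarrow> path_sum c h \<le> n"
    and "0 \<le> t"
  shows "(\<Sum>h | length h = N \<and> n * t \<le> \<bar>path_sum d h\<bar>. p h) \<le> 2 * p [] * exp (- (2 * n * t\<^sup>2))"
proof -
  have one_sided:
    "(\<Sum>h | length h = N \<and> n * t \<le> s * path_sum d h. p h) \<le> p [] * exp (- (2 * n * t\<^sup>2))"
    if "s = 1 \<or> s = -1" for s :: real
  proof (rule exp_supermartingale_tail[where l = "4 * s * t" and N = N])
    fix h assume h: "h \<in> {h. length h = N \<and> n * t \<le> s * path_sum d h}"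
    have "4 * t * (n * t) \<le> 4 * t * (s * path_sum d h)" "2 * t\<^sup>2 * path_sum c h \<le> 2 * t\<^sup>2 * n"
      using h bounded \<open>0 \<le> t\<close> by (auto intro!: mult_left_mono)
    then show "2 * n * t\<^sup>2 \<le> 4 * s * t * path_sum d h - (4 * s * t)\<^sup>2 * path_sum c h / 8"
      using that by (auto simp: power2_eq_square algebra_simps)
  qed (use nonneg step in auto)
  have fin: "finite {h :: 't list. length h = N \<and> P h}" for P
    by (rule finite_subset[OF _ finite_lists_length[of N]]) auto
  define A where "A s = {h. length h = N \<and> n * t \<le> s * path_sum d h}" for s :: real
  have "{h. length h = N \<and> n * t \<le> \<bar>path_sum d h\<bar>} = A 1 \<union> A (-1)"
    by (auto simp: A_def abs_real_def)
  then have "(\<Sum>h | length h = N \<and> n * t \<le> \<bar>path_sum d h\<bar>. p h)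
      = sum p (A 1) + sum p (A (-1)) - sum p (A 1 \<inter> A (-1))"
    by (simp add: sum_Un fin A_def)
  moreover have "0 \<le> sum p (A 1 \<inter> A (-1))"
    by (simp add: nonneg sum_nonneg)
  ultimately show ?thesis
    using one_sided[of 1] one_sided[of "-1"] unfolding A_def by linarith
qed

section \<open>Counting along an observation sequence\<close>

definition obs_prefix ::
    "(nat \<Rightarrow> 'x) \<Rightarrow> (nat \<Rightarrow> 'y) \<Rightarrow> (nat \<Rightarrow> 'z) \<Rightarrow> nat \<Rightarrow> ('x \<times> 'y \<times> 'z) list" where
  "obs_prefix xs ys zs n = map (\<lambda>i. (xs i, ys i, zs i)) [1..<Suc n]"

lemma obs_prefix_0 [simp]: "obs_prefix xs ys zs 0 = []"
  by (simp add: obs_prefix_def)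

lemma obs_prefix_Suc:
  "obs_prefix xs ys zs (Suc n) = obs_prefix xs ys zs n @ [(xs (Suc n), ys (Suc n), zs (Suc n))]"
  by (simp add: obs_prefix_def)

lemma length_obs_prefix [simp]: "length (obs_prefix xs ys zs n) = n"
  by (simp add: obs_prefix_def)

lemma obs_prefix_eq_iff:
  "obs_prefix xs ys zs n = obs_prefix xs' ys' zs' n \<longleftrightarrow>
    (\<forall>i\<in>{1..n}. xs i = xs' i \<and> ys i = ys' i \<and> zs i = zs' i)"
  by (auto simp: obs_prefix_def map_eq_conv atLeastLessThanSuc_atLeastAtMost simp del: upt_Suc)

lemma card_interval_filter_Suc:
  "card {i \<in> {1..Suc n}. P i} = card {i \<in> {1..n}. P i} + of_bool (P (Suc n))"
proof -
  have "{i \<in> {1..Suc n}. P i} = {i \<in> {1..n}. P i} \<union> (if P (Suc n) then {Suc n} else {})"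
    by (auto simp: le_Suc_eq)
  then show ?thesis by auto
qed

lemma cnt_Suc:
  "cnt xs zs (Suc n) x z = cnt xs zs n x z + of_bool (xs (Suc n) = x \<and> zs (Suc n) = z)"
  unfolding cnt_def by (rule card_interval_filter_Suc)

lemma cnt_0 [simp]: "cnt xs zs 0 x z = 0"
  by (simp add: cnt_def)

lemma cnt_le: "cnt xs zs n x z \<le> n"
proof -
  have "cnt xs zs n x z \<le> card {1..n}"
    unfolding cnt_def by (rule card_mono) auto
  then show ?thesis
    by simp
qed

definition count_obs :: "'x \<Rightarrow> 'z \<Rightarrow> ('x \<times> 'y \<times> 'z) list \<Rightarrow> nat" where
  "count_obs x z h = length (filter (\<lambda>t. fst t = x \<and> snd (snd t) = z) h)"

lemma count_obs_obs_prefix: "count_obs x z (obs_prefix xs ys zs n) = cnt xs zs n x z"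
  by (induction n) (simp_all add: count_obs_def obs_prefix_Suc cnt_Suc)

definition freq_incr ::
    "'z \<Rightarrow> real \<Rightarrow> ('x \<times> 'y \<times> 'z) list \<Rightarrow> 'x \<times> 'y \<times> 'z \<Rightarrow> real" where
  "freq_incr z0 p0 h t = of_bool (snd (snd t) = z0) - p0"

(* The observations averaged by pcheck when pow2floor (cnt ...) = K: those with
   (X, Z) = (x0, z0) preceded by fewer than K such observations. *)
definition sampled ::
    "'x \<Rightarrow> 'z \<Rightarrow> nat \<Rightarrow> ('x \<times> 'y \<times> 'z) list \<Rightarrow> 'x \<times> 'y \<times> 'z \<Rightarrow> bool" where
  "sampled x0 z0 K h t \<longleftrightarrow> fst t = x0 \<and> snd (snd t) = z0 \<and> count_obs x0 z0 h < K"

definition outcome_incr ::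
    "'x \<Rightarrow> 'y \<Rightarrow> 'z \<Rightarrow> nat \<Rightarrow> real \<Rightarrow> ('x \<times> 'y \<times> 'z) list \<Rightarrow> 'x \<times> 'y \<times> 'z \<Rightarrow> real" where
  "outcome_incr x0 y0 z0 K q0 h t =
     of_bool (sampled x0 z0 K h t) * (of_bool (fst (snd t) = y0) - q0)"

lemma path_sum_freq_incr:
  "path_sum (freq_incr z0 p0) (obs_prefix xs ys zs n)
    = real (card {i \<in> {1..n}. zs i = z0}) - real n * p0"
proof (induction n)
  case (Suc n)
  show ?case
    unfolding obs_prefix_Suc path_sum_snoc Suc card_interval_filter_Suc
    by (simp add: freq_incr_def algebra_simps)
qed simp

lemma path_sum_sampled:
  "path_sum (\<lambda>h t. of_bool (sampled x0 z0 K h t)) h = real (min (count_obs x0 z0 h) K)"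
  by (induction h rule: rev_induct) (auto simp: sampled_def count_obs_def)

lemma path_sum_outcome_incr:
  "path_sum (outcome_incr x0 y0 z0 K q0) (obs_prefix xs ys zs n) =
     real (card {i \<in> {1..n}. cnt xs zs i x0 z0 \<le> K \<and> xs i = x0 \<and> ys i = y0 \<and> zs i = z0})
     - q0 * real (min (cnt xs zs n x0 z0) K)"
proof (induction n)
  case (Suc n)
  show ?case
    unfolding obs_prefix_Suc path_sum_snoc Suc card_interval_filter_Suc
    by (auto simp: cnt_Suc outcome_incr_def sampled_def count_obs_obs_prefix algebra_simps)
qed simp

lemma path_sum_freq_incr_phat:
  "0 < n \<Longrightarrow> path_sum (freq_incr z0 p0) (obs_prefix xs ys zs n) = real n * (phat zs n z0 - p0)"
  unfolding path_sum_freq_incr phat_def by (simp add: field_simps)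

lemma path_sum_outcome_incr_pcheck:
  assumes "pow2floor (cnt xs zs n x0 z0) = 2 ^ k" and "2 ^ k \<le> cnt xs zs n x0 z0"
  shows "path_sum (outcome_incr x0 y0 z0 (2 ^ k) q0) (obs_prefix xs ys zs n)
    = 2 ^ k * (pcheck xs ys zs n y0 x0 z0 - q0)"
  unfolding path_sum_outcome_incr pcheck_def assms(1) using assms(2) by (simp add: field_simps)

section \<open>Where the confidence interval can fail\<close>

lemma pow2floor_eq_power:
  assumes "2 \<le> n"
  obtains k where "1 \<le> k" "pow2floor n = 2 ^ k" "2 ^ k \<le> n"
proof -
  let ?P = "\<lambda>k. 1 \<le> k \<and> (2::nat) ^ k \<le> n"
  have bound: "k \<le> n" if "?P k" for k
    using that less_exp[of k] by linarith
  have "?P 1"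
    using assms by simp
  then have "?P (Greatest ?P)"
    using bound by (rule GreatestI_nat)
  moreover have "pow2floor n = 2 ^ (Greatest ?P)"
    using assms by (simp add: pow2floor_def)
  ultimately show ?thesis
    using that by blast
qed

lemma abs_sum_mult_diff_le:
  fixes a b p r e :: "'z::finite \<Rightarrow> real" and e0 :: real
  assumes "\<And>z. 0 \<le> a z" "\<And>z. a z \<le> 1" "\<And>z. 0 \<le> r z" "\<And>z. r z \<le> 1"
    and "\<And>z. \<bar>a z - p z\<bar> \<le> e0" and "\<And>z. \<bar>b z - r z\<bar> \<le> e z"
  shows "\<bar>(\<Sum>z\<in>UNIV. a z * b z) - (\<Sum>z\<in>UNIV. r z * p z)\<bar> \<le> real CARD('z) * e0 + (\<Sum>z\<in>UNIV. e z)"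
proof -
  have term_bound: "\<bar>a z * b z - r z * p z\<bar> \<le> e z + e0" for z
  proof -
    have "\<bar>a z * (b z - r z)\<bar> \<le> 1 * e z" "\<bar>r z * (a z - p z)\<bar> \<le> 1 * e0"
      unfolding abs_mult using assms by (intro mult_mono; simp)+
    moreover have "a z * b z - r z * p z = a z * (b z - r z) + r z * (a z - p z)"
      by (simp add: algebra_simps)
    ultimately show ?thesis by linarith
  qed
  have "\<bar>(\<Sum>z\<in>UNIV. a z * b z) - (\<Sum>z\<in>UNIV. r z * p z)\<bar> \<le> (\<Sum>z\<in>UNIV. \<bar>a z * b z - r z * p z\<bar>)"
    unfolding sum_subtractf[symmetric] by (rule sum_abs)
  also have "\<dots> \<le> (\<Sum>z\<in>UNIV. e z + e0)"
    by (intro sum_mono term_bound)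
  finally show ?thesis
    by (simp add: sum.distrib)
qed

definition freq_radius :: "nat \<Rightarrow> nat \<Rightarrow> real \<Rightarrow> real" where
  "freq_radius C N \<delta> = sqrt (ln (4 * real C / \<delta>) / (2 * real N))"

definition dyadic_radius :: "nat \<Rightarrow> real \<Rightarrow> nat \<Rightarrow> real" where
  "dyadic_radius C \<delta> k = sqrt ((2 * ln (real k) + ln (6.6 * real C / \<delta>)) / (2 * 2 ^ k))"

lemma freq_radius_nonneg: "0 < \<delta> \<Longrightarrow> \<delta> \<le> 4 * real C \<Longrightarrow> 0 \<le> freq_radius C N \<delta>"
  by (simp add: freq_radius_def)

lemma dyadic_radius_nonneg:
  "1 \<le> k \<Longrightarrow> 0 < \<delta> \<Longrightarrow> \<delta> \<le> 6.6 * real C \<Longrightarrow> 0 \<le> dyadic_radius C \<delta> k"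
  by (simp add: dyadic_radius_def)

lemma exp_freq_radius:
  assumes "0 < N" "0 < \<delta>" "\<delta> \<le> 4 * real C"
  shows "exp (- (2 * real N * (freq_radius C N \<delta>)\<^sup>2)) = \<delta> / (4 * real C)"
proof -
  have "1 \<le> 4 * real C / \<delta>"
    using assms by simp
  then have "2 * real N * (freq_radius C N \<delta>)\<^sup>2 = ln (4 * real C / \<delta>)"
    using assms by (simp add: freq_radius_def)
  then show ?thesis
    using assms by (simp add: exp_minus)
qed

lemma exp_dyadic_radius:
  assumes "1 \<le> k" "0 < \<delta>" "\<delta> \<le> 6.6 * real C"
  shows "exp (- (2 * 2 ^ k * (dyadic_radius C \<delta> k)\<^sup>2)) = \<delta> / (6.6 * real C * (real k)\<^sup>2)"
proof -
  have "1 \<le> 6.6 * real C / \<delta>"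
    using assms by simp
  then have "2 * 2 ^ k * (dyadic_radius C \<delta> k)\<^sup>2 = 2 * ln (real k) + ln (6.6 * real C / \<delta>)"
    using assms by (simp add: dyadic_radius_def)
  also have "\<dots> = ln ((real k)\<^sup>2) + ln (6.6 * real C / \<delta>)"
    using assms by (simp add: ln_realpow)
  also have "\<dots> = ln ((real k)\<^sup>2 * (6.6 * real C / \<delta>))"
    using assms \<open>1 \<le> 6.6 * real C / \<delta>\<close> by (subst ln_mult) simp
  finally have
    "exp (- (2 * 2 ^ k * (dyadic_radius C \<delta> k)\<^sup>2)) = 1 / ((real k)\<^sup>2 * (6.6 * real C / \<delta>))"
    using assms \<open>1 \<le> 6.6 * real C / \<delta>\<close> by (simp add: exp_minus)
  then show ?thesis
    by (simp add: field_simps)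
qed

lemma sum_inverse_squares_le_aux:
  assumes "3 \<le> n"
  shows "(\<Sum>k=1..n. 1 / (real k)\<^sup>2) \<le> 1.65 - 2 / (2 * real n + 1)"
  using assms
proof (induction n rule: nat_induct_at_least)
  case base
  show ?case by (simp add: numeral_eq_Suc)
next
  case (Suc n)
  have "(2 * real n + 1) * (2 * real n + 3) \<le> 4 * (real (Suc n))\<^sup>2"
    by (simp add: power2_eq_square algebra_simps)
  then have "4 / (4 * (real (Suc n))\<^sup>2) \<le> 4 / ((2 * real n + 1) * (2 * real n + 3))"
    by (intro divide_left_mono) auto
  then have "1 / (real (Suc n))\<^sup>2 \<le> 4 / ((2 * real n + 1) * (2 * real n + 3))"
    by simp
  also have "\<dots> = 2 / (2 * real n + 1) - 2 / (2 * real (Suc n) + 1)"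
    by (simp add: field_simps)
  finally show ?case
    using Suc.IH by (simp add: sum.cl_ivl_Suc)
qed

lemma sum_inverse_squares_le: "(\<Sum>k=1..n. 1 / (real k)\<^sup>2) \<le> 1.65"
proof (cases "3 \<le> n")
  case True
  then show ?thesis
    using sum_inverse_squares_le_aux[OF True] divide_nonneg_nonneg[of 2 "2 * real n + 1"]
    by linarith
next
  case False
  then have "n = 0 \<or> n = 1 \<or> n = 2" by auto
  then show ?thesis by (auto simp: numeral_eq_Suc)
qed

lemma h_est_eq_radii:
  fixes zs :: "nat \<Rightarrow> 'z::finite"
  assumes "\<And>z. pow2floor (cnt xs zs N x z) = 2 ^ k z"
  shows "h_est xs zs N \<delta> x
    = real CARD('z) * freq_radius CARD('z) N \<delta> + (\<Sum>z\<in>UNIV. dyadic_radius CARD('z) \<delta> (k z))"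
  unfolding h_est_def freq_radius_def dyadic_radius_def assms by simp

lemma phat_bounds: "0 \<le> phat zs N z" "phat zs N z \<le> 1"
proof -
  have "card {n \<in> {1..N}. zs n = z} \<le> card {1..N}"
    by (rule card_mono) auto
  then show "0 \<le> phat zs N z" "phat zs N z \<le> 1"
    by (auto simp: phat_def divide_le_eq)
qed

lemma not_in_ci_imp_estimate_error:
  fixes zs :: "nat \<Rightarrow> 'z::finite" and r :: "'z \<Rightarrow> real"
  assumes "\<not> in_ci xs ys zs N \<delta> y x (\<Sum>z\<in>UNIV. r z * \<pi> z)"
    and "\<And>z. 0 \<le> r z" "\<And>z. r z \<le> 1"
  shows "(\<exists>z. freq_radius CARD('z) N \<delta> < \<bar>phat zs N z - \<pi> z\<bar>) \<or>
    (\<exists>z k. k \<in> {1..N} \<and> pow2floor (cnt xs zs N x z) = 2 ^ k \<and> 2 ^ k \<le> cnt xs zs N x z \<and>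
       dyadic_radius CARD('z) \<delta> k < \<bar>pcheck xs ys zs N y x z - r z\<bar>)"
proof (rule ccontr)
  assume close: "\<not> ?thesis"
  have two: "2 \<le> cnt xs zs N x z" for z
    using assms(1) by (auto simp: in_ci_def not_less)
  have far: "h_est xs zs N \<delta> x < \<bar>m_est xs ys zs N y x - (\<Sum>z\<in>UNIV. r z * \<pi> z)\<bar>"
    using assms(1) by (auto simp: in_ci_def not_less abs_real_def)
  have "\<forall>z. \<exists>k. 1 \<le> k \<and> pow2floor (cnt xs zs N x z) = 2 ^ k \<and> 2 ^ k \<le> cnt xs zs N x z"
    using pow2floor_eq_power[OF two] by blast
  then obtain k where k: "\<And>z. 1 \<le> k z" "\<And>z. pow2floor (cnt xs zs N x z) = 2 ^ k z"
    "\<And>z. 2 ^ k z \<le> cnt xs zs N x z"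
    by metis
  have "k z \<le> N" for z
    using less_exp[of "k z"] k(3)[of z] cnt_le[of xs zs N x z] by linarith
  then have "\<bar>pcheck xs ys zs N y x z - r z\<bar> \<le> dyadic_radius CARD('z) \<delta> (k z)" for z
    using close k by (meson atLeastAtMost_iff not_less)
  moreover have "\<bar>phat zs N z - \<pi> z\<bar> \<le> freq_radius CARD('z) N \<delta>" for z
    using close by (meson not_less)
  ultimately have "\<bar>m_est xs ys zs N y x - (\<Sum>z\<in>UNIV. r z * \<pi> z)\<bar> \<le> h_est xs zs N \<delta> x"
    unfolding m_est_def h_est_eq_radii[OF k(2)]
    by (intro abs_sum_mult_diff_le phat_bounds assms(2,3))
  with far show False by linarith
qed

section \<open>The sequential back-door process\<close>

lemma sum_UNIV_triple:
  "(\<Sum>t\<in>UNIV. f t) = (\<Sum>z\<in>UNIV. \<Sum>x\<in>UNIV. \<Sum>y\<in>UNIV. f (x, y, z))"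
  for f :: "'x::finite \<times> 'y::finite \<times> 'z::finite \<Rightarrow> 'a::comm_monoid_add"
proof -
  have "(\<Sum>t\<in>UNIV. f t) = (\<Sum>x\<in>UNIV. \<Sum>y\<in>UNIV. \<Sum>z\<in>UNIV. f (x, y, z))"
    by (simp add: UNIV_Times_UNIV[symmetric] sum.cartesian_product del: UNIV_Times_UNIV)
  also have "\<dots> = (\<Sum>x\<in>UNIV. \<Sum>z\<in>UNIV. \<Sum>y\<in>UNIV. f (x, y, z))"
    by (rule sum.cong[OF refl], rule sum.swap)
  also have "\<dots> = (\<Sum>z\<in>UNIV. \<Sum>x\<in>UNIV. \<Sum>y\<in>UNIV. f (x, y, z))"
    by (rule sum.swap)
  finally show ?thesis .
qed

lemma in_ci_cong:
  assumes "obs_prefix xs ys zs N = obs_prefix xs' ys' zs' N"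
  shows "in_ci xs ys zs N \<delta> y x p = in_ci xs' ys' zs' N \<delta> y x p"
proof -
  have agree: "\<forall>i\<in>{1..N}. xs i = xs' i \<and> ys i = ys' i \<and> zs i = zs' i"
    using assms by (simp add: obs_prefix_eq_iff)
  have cnt_eq: "cnt xs zs m x' z = cnt xs' zs' m x' z" if "m \<le> N" for m x' z
    unfolding cnt_def using agree that by (intro arg_cong[where f = card]) auto
  have "phat zs N = phat zs' N"
    unfolding phat_def using agree
    by (intro ext arg_cong[where f = card] arg_cong2[where f = "(/)"] refl arg_cong[where f = real])
      auto
  moreover have "pcheck xs ys zs N y x' z = pcheck xs' ys' zs' N y x' z" for x' z
    unfolding pcheck_def cnt_eq[OF order_refl] using agree cnt_eq
    by (intro arg_cong2[where f = "(/)"] refl arg_cong[where f = real] arg_cong[where f = card])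
      auto
  ultimately show ?thesis
    unfolding in_ci_def m_est_def h_est_def cnt_eq[OF order_refl] by simp
qed

locale backdoor_process = prob_space M for M :: "'w measure" +
  fixes X :: "nat \<Rightarrow> 'w \<Rightarrow> 'x::finite"
    and Y :: "nat \<Rightarrow> 'w \<Rightarrow> 'y::finite"
    and Z :: "nat \<Rightarrow> 'w \<Rightarrow> 'z::finite"
    and \<pi> :: "'z \<Rightarrow> real"
    and q :: "'y \<Rightarrow> 'x \<Rightarrow> 'z \<Rightarrow> real"
    and N :: nat
  assumes measX: "\<And>n. n \<in> {1..N} \<Longrightarrow> X n \<in> M \<rightarrow>\<^sub>M count_space UNIV"
    and measY: "\<And>n. n \<in> {1..N} \<Longrightarrow> Y n \<in> M \<rightarrow>\<^sub>M count_space UNIV"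
    and measZ: "\<And>n. n \<in> {1..N} \<Longrightarrow> Z n \<in> M \<rightarrow>\<^sub>M count_space UNIV"
    and pi_nonneg: "\<And>z. \<pi> z \<ge> 0" and pi_sum: "(\<Sum>z\<in>UNIV. \<pi> z) = 1"
    and q_nonneg: "\<And>y' x z. q y' x z \<ge> 0"
    and q_sum: "\<And>x z. (\<Sum>y'\<in>UNIV. q y' x z) = 1"
    and condZ: "\<And>n hs z. n \<in> {1..N} \<Longrightarrow>
        measure M {\<omega> \<in> space M. map (\<lambda>i. (X i \<omega>, Y i \<omega>, Z i \<omega>)) [1..<n] = hs \<and> Z n \<omega> = z}
        = \<pi> z * measure M {\<omega> \<in> space M. map (\<lambda>i. (X i \<omega>, Y i \<omega>, Z i \<omega>)) [1..<n] = hs}"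
    and condY: "\<And>n hs z x y'. n \<in> {1..N} \<Longrightarrow>
        measure M {\<omega> \<in> space M. map (\<lambda>i. (X i \<omega>, Y i \<omega>, Z i \<omega>)) [1..<n] = hs
                                  \<and> Z n \<omega> = z \<and> X n \<omega> = x \<and> Y n \<omega> = y'}
        = q y' x z * measure M {\<omega> \<in> space M. map (\<lambda>i. (X i \<omega>, Y i \<omega>, Z i \<omega>)) [1..<n] = hs
                                  \<and> Z n \<omega> = z \<and> X n \<omega> = x}"
begin

definition hist :: "nat \<Rightarrow> 'w \<Rightarrow> ('x \<times> 'y \<times> 'z) list" where
  "hist n \<omega> = obs_prefix (\<lambda>i. X i \<omega>) (\<lambda>i. Y i \<omega>) (\<lambda>i. Z i \<omega>) n"

definition Pr :: "('x \<times> 'y \<times> 'z) list \<Rightarrow> real" where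
  "Pr h = prob {\<omega> \<in> space M. hist (length h) \<omega> = h}"

definition Pr_next :: "('x \<times> 'y \<times> 'z) list \<Rightarrow> 'z \<Rightarrow> 'x \<Rightarrow> real" where
  "Pr_next h z x = prob {\<omega> \<in> space M. hist (length h) \<omega> = h
     \<and> Z (Suc (length h)) \<omega> = z \<and> X (Suc (length h)) \<omega> = x}"

lemma Pr_nonneg: "0 \<le> Pr h"
  by (simp add: Pr_def)

lemma Pr_next_nonneg: "0 \<le> Pr_next h z x"
  by (simp add: Pr_next_def)

lemma q_le_1: "q y' x z \<le> 1"
  using member_le_sum[of y' UNIV "\<lambda>y'. q y' x z"] q_nonneg q_sum by simp

lemma sets_obs_eq:
  assumes "i \<in> {1..N}"
  shows "{\<omega> \<in> space M. X i \<omega> = a} \<in> sets M" "{\<omega> \<in> space M. Y i \<omega> = b} \<in> sets M"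
    "{\<omega> \<in> space M. Z i \<omega> = c} \<in> sets M"
  using measurable_sets_Collect[OF measX[OF assms], where P = "\<lambda>v. v = a"]
    measurable_sets_Collect[OF measY[OF assms], where P = "\<lambda>v. v = b"]
    measurable_sets_Collect[OF measZ[OF assms], where P = "\<lambda>v. v = c"]
  by simp_all

lemma sets_hist_eq: "n \<le> N \<Longrightarrow> {\<omega> \<in> space M. hist n \<omega> = h} \<in> sets M"
proof (induction n arbitrary: h)
  case 0
  show ?case
    by (cases "h = []") (auto simp: hist_def)
next
  case (Suc n)
  show ?case
  proof (cases h rule: rev_cases)
    case Nil
    then show ?thesis
      by (simp add: hist_def obs_prefix_Suc)
  next
    case (snoc h' t)
    obtain a b c where "t = (a, b, c)"
      by (cases t)
    then have "{\<omega> \<in> space M. hist (Suc n) \<omega> = h} = {\<omega> \<in> space M. hist n \<omega> = h'}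
        \<inter> {\<omega> \<in> space M. X (Suc n) \<omega> = a} \<inter> {\<omega> \<in> space M. Y (Suc n) \<omega> = b}
        \<inter> {\<omega> \<in> space M. Z (Suc n) \<omega> = c}"
      by (auto simp: hist_def obs_prefix_Suc snoc)
    moreover have "Suc n \<in> {1..N}"
      using Suc.prems by simp
    ultimately show ?thesis
      using Suc sets_obs_eq by simp
  qed
qed

lemma hist_in_eq_UN:
  "{\<omega> \<in> space M. hist n \<omega> \<in> E} = (\<Union>h\<in>E \<inter> {h. length h = n}. {\<omega> \<in> space M. hist n \<omega> = h})"
  by (auto simp: hist_def)

lemma sets_hist_in: "n \<le> N \<Longrightarrow> {\<omega> \<in> space M. hist n \<omega> \<in> E} \<in> sets M"
  unfolding hist_in_eq_UN using finite_lists_length sets_hist_eq by (intro sets.finite_UN) auto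

lemma sets_hist_determined:
  assumes "n \<le> N" and "\<And>\<omega> \<omega>'. hist n \<omega> = hist n \<omega>' \<Longrightarrow> P \<omega> = P \<omega>'"
  shows "{\<omega> \<in> space M. P \<omega>} \<in> sets M"
proof -
  have "{\<omega> \<in> space M. P \<omega>} = {\<omega> \<in> space M. hist n \<omega> \<in> hist n ` {\<omega>. P \<omega>}}"
    using assms(2) by blast
  then show ?thesis
    using sets_hist_in[OF assms(1)] by simp
qed

lemma prob_hist_in:
  assumes "n \<le> N" "E \<subseteq> {h. length h = n}"
  shows "prob {\<omega> \<in> space M. hist n \<omega> \<in> E} = (\<Sum>h\<in>E. Pr h)"
proof -
  have "finite E"
    using assms(2) finite_lists_length finite_subset by blast
  then have "prob {\<omega> \<in> space M. hist n \<omega> \<in> E} = (\<Sum>h\<in>E. prob {\<omega> \<in> space M. hist n \<omega> = h})"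
    unfolding hist_in_eq_UN using assms sets_hist_eq
    by (subst finite_measure_finite_Union) (auto simp: disjoint_family_on_def Int_absorb2)
  also have "\<dots> = (\<Sum>h\<in>E. Pr h)"
    using assms(2) by (intro sum.cong) (auto simp: Pr_def)
  finally show ?thesis .
qed

lemma Pr_Nil: "Pr [] = 1"
  by (simp add: Pr_def hist_def prob_space)

lemma Pr_snoc:
  assumes "length h < N"
  shows "Pr (h @ [(x, y, z)]) = q y x z * Pr_next h z x"
proof -
  have "Suc (length h) \<in> {1..N}"
    using assms by simp
  from condY[OF this, of h z x y] show ?thesis
    by (simp add: Pr_def Pr_next_def hist_def obs_prefix_def conj_ac)
qed

lemma sum_Pr_next:
  assumes "length h < N"
  shows "(\<Sum>x\<in>UNIV. Pr_next h z x) = \<pi> z * Pr h"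
proof -
  have n: "Suc (length h) \<in> {1..N}"
    using assms by simp
  let ?A = "\<lambda>x. {\<omega> \<in> space M.
    hist (length h) \<omega> = h \<and> Z (Suc (length h)) \<omega> = z \<and> X (Suc (length h)) \<omega> = x}"
  have "?A x = {\<omega> \<in> space M. hist (length h) \<omega> = h} \<inter> {\<omega> \<in> space M. Z (Suc (length h)) \<omega> = z}
      \<inter> {\<omega> \<in> space M. X (Suc (length h)) \<omega> = x}" for x
    by auto
  then have "?A x \<in> sets M" for x
    using sets_hist_eq[of "length h" h] assms sets_obs_eq[OF n] by simp
  then have "(\<Sum>x\<in>UNIV. Pr_next h z x) = prob (\<Union>x. ?A x)"
    unfolding Pr_next_def
    by (intro finite_measure_finite_Union[symmetric]) (auto simp: disjoint_family_on_def)
  also have "(\<Union>x. ?A x) = {\<omega> \<in> space M. hist (length h) \<omega> = h \<and> Z (Suc (length h)) \<omega> = z}"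
    by auto
  also have "prob \<dots> = \<pi> z * Pr h"
    using condZ[OF n, of h z] by (simp add: Pr_def hist_def obs_prefix_def)
  finally show ?thesis .
qed

lemma freq_incr_mgf_step:
  assumes "length h < N"
  shows "(\<Sum>t\<in>UNIV. Pr (h @ [t]) * exp (l * freq_incr z0 (\<pi> z0) h t - l\<^sup>2 / 8)) \<le> Pr h"
proof -
  define e where "e z = exp (l * (of_bool (z = z0) - \<pi> z0) - l\<^sup>2 / 8)" for z
  have "(\<Sum>t\<in>UNIV. Pr (h @ [t]) * exp (l * freq_incr z0 (\<pi> z0) h t - l\<^sup>2 / 8))
      = (\<Sum>z\<in>UNIV. \<Sum>x\<in>UNIV. \<Sum>y\<in>UNIV. e z * (q y x z * Pr_next h z x))"
    using assms by (simp add: sum_UNIV_triple freq_incr_def e_def Pr_snoc mult.commute)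
  also have "\<dots> = (\<Sum>z\<in>UNIV. e z * (\<Sum>x\<in>UNIV. Pr_next h z x))"
    by (simp add: sum_distrib_left[symmetric] sum_distrib_right[symmetric] q_sum)
  also have "\<dots> = Pr h * (\<Sum>z\<in>UNIV. \<pi> z * e z)"
    using assms by (simp add: sum_Pr_next sum_distrib_left algebra_simps)
  also have "\<dots> \<le> Pr h"
    using hoeffding_lemma_indicator[of \<pi> l z0] pi_nonneg pi_sum Pr_nonneg
    by (intro mult_left_le) (auto simp: e_def)
  finally show ?thesis .
qed

lemma outcome_incr_mgf_step:
  assumes "length h < N"
  shows "(\<Sum>t\<in>UNIV. Pr (h @ [t]) * exp (l * outcome_incr x0 y0 z0 K (q y0 x0 z0) h t
      - l\<^sup>2 * of_bool (sampled x0 z0 K h t) / 8)) \<le> Pr h"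
proof -
  define e where "e t = exp (l * outcome_incr x0 y0 z0 K (q y0 x0 z0) h t
      - l\<^sup>2 * of_bool (sampled x0 z0 K h t) / 8)" for t
  have inner: "(\<Sum>y\<in>UNIV. q y x z * e (x, y, z)) \<le> 1" for x z
  proof (cases "sampled x0 z0 K h (x, y0, z)")
    case True
    then have "x = x0" "z = z0" "\<And>y. sampled x0 z0 K h (x, y, z)"
      by (auto simp: sampled_def)
    then have "(\<Sum>y\<in>UNIV. q y x z * e (x, y, z))
        = (\<Sum>y\<in>UNIV. q y x0 z0 * exp (l * (of_bool (y = y0) - q y0 x0 z0) - l\<^sup>2 / 8))"
      by (simp add: e_def outcome_incr_def)
    also have "\<dots> \<le> 1"
      using hoeffding_lemma_indicator[of "\<lambda>y. q y x0 z0"] q_nonneg q_sum by blast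
    finally show ?thesis .
  next
    case False
    then have "\<And>y. \<not> sampled x0 z0 K h (x, y, z)"
      by (auto simp: sampled_def)
    then show ?thesis
      by (simp add: e_def outcome_incr_def q_sum)
  qed
  have "(\<Sum>t\<in>UNIV. Pr (h @ [t]) * e t)
      = (\<Sum>z\<in>UNIV. \<Sum>x\<in>UNIV. Pr_next h z x * (\<Sum>y\<in>UNIV. q y x z * e (x, y, z)))"
    using assms by (simp add: sum_UNIV_triple Pr_snoc sum_distrib_left algebra_simps)
  also have "\<dots> \<le> (\<Sum>z\<in>UNIV. \<Sum>x\<in>UNIV. Pr_next h z x)"
    using inner Pr_next_nonneg by (intro sum_mono mult_left_le) auto
  also have "\<dots> = Pr h"
    using assms pi_sum by (simp add: sum_Pr_next sum_distrib_right[symmetric])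
  finally show ?thesis
    by (simp add: e_def)
qed

lemma prob_large_path_sum:
  assumes step: "\<And>l h. length h < N \<Longrightarrow>
      (\<Sum>t\<in>UNIV. Pr (h @ [t]) * exp (l * d h t - l\<^sup>2 * c h t / 8)) \<le> Pr h"
    and bounded: "\<And>h. length h = N \<Longrightarrow> path_sum c h \<le> n" and "0 \<le> t"
  shows "prob {\<omega> \<in> space M. n * t \<le> \<bar>path_sum d (hist N \<omega>)\<bar>} \<le> 2 * exp (- (2 * n * t\<^sup>2))"
proof -
  have "prob {\<omega> \<in> space M. n * t \<le> \<bar>path_sum d (hist N \<omega>)\<bar>}
      = prob {\<omega> \<in> space M. hist N \<omega> \<in> {h. length h = N \<and> n * t \<le> \<bar>path_sum d h\<bar>}}"
    by (simp add: hist_def)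
  also have "\<dots> = (\<Sum>h | length h = N \<and> n * t \<le> \<bar>path_sum d h\<bar>. Pr h)"
    by (rule prob_hist_in) auto
  also have "\<dots> \<le> 2 * Pr [] * exp (- (2 * n * t\<^sup>2))"
    using Pr_nonneg step bounded \<open>0 \<le> t\<close> by (rule azuma_hoeffding_tail)
  finally show ?thesis
    by (simp add: Pr_Nil)
qed

definition freq_deviation :: "real \<Rightarrow> 'z \<Rightarrow> 'w set" where
  "freq_deviation \<delta> z = {\<omega> \<in> space M.
     real N * freq_radius CARD('z) N \<delta> \<le> \<bar>path_sum (freq_incr z (\<pi> z)) (hist N \<omega>)\<bar>}"

definition outcome_deviation :: "real \<Rightarrow> 'x \<Rightarrow> 'y \<Rightarrow> 'z \<Rightarrow> nat \<Rightarrow> 'w set" where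
  "outcome_deviation \<delta> x y z k = {\<omega> \<in> space M.
     2 ^ k * dyadic_radius CARD('z) \<delta> k
     \<le> \<bar>path_sum (outcome_incr x y z (2 ^ k) (q y x z)) (hist N \<omega>)\<bar>}"

lemma sets_deviation: "freq_deviation \<delta> z \<in> events" "outcome_deviation \<delta> x y z k \<in> events"
  unfolding freq_deviation_def outcome_deviation_def
  by (intro sets_hist_determined[OF order_refl]; simp)+

lemma prob_freq_deviation:
  assumes "1 \<le> N" "0 < \<delta>" "\<delta> < 1"
  shows "prob (freq_deviation \<delta> z) \<le> \<delta> / (2 * real CARD('z))"
proof -
  have "1 \<le> real CARD('z)"
    by simp
  then have card: "\<delta> \<le> 4 * real CARD('z)"
    using assms by linarith
  have "0 \<le> freq_radius CARD('z) N \<delta>"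
    using assms(2) card by (rule freq_radius_nonneg)
  then have "prob (freq_deviation \<delta> z) \<le> 2 * exp (- (2 * real N * (freq_radius CARD('z) N \<delta>)\<^sup>2))"
    unfolding freq_deviation_def
    by (intro prob_large_path_sum[where c = "\<lambda>h t. 1"])
      (auto simp: path_sum_def intro: freq_incr_mgf_step)
  also have "\<dots> = \<delta> / (2 * real CARD('z))"
    using assms card by (simp add: exp_freq_radius)
  finally show ?thesis .
qed

lemma prob_outcome_deviation:
  assumes "1 \<le> k" "0 < \<delta>" "\<delta> < 1"
  shows "prob (outcome_deviation \<delta> x y z k) \<le> \<delta> / (3.3 * real CARD('z) * (real k)\<^sup>2)"
proof -
  have "1 \<le> real CARD('z)"
    by simp
  then have card: "\<delta> \<le> 6.6 * real CARD('z)"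
    using assms by linarith
  have "0 \<le> dyadic_radius CARD('z) \<delta> k"
    using assms(1,2) card by (rule dyadic_radius_nonneg)
  then have "prob (outcome_deviation \<delta> x y z k)
      \<le> 2 * exp (- (2 * 2 ^ k * (dyadic_radius CARD('z) \<delta> k)\<^sup>2))"
    unfolding outcome_deviation_def
    by (intro prob_large_path_sum[where c = "\<lambda>h t. of_bool (sampled x z (2 ^ k) h t)"]
        outcome_incr_mgf_step) (auto simp: path_sum_sampled)
  also have "\<dots> = \<delta> / (3.3 * real CARD('z) * (real k)\<^sup>2)"
    using assms card by (simp add: exp_dyadic_radius)
  finally show ?thesis .
qed

lemma not_in_ci_subset_deviations:
  assumes "1 \<le> N"
  shows "{\<omega> \<in> space M.
      \<not> in_ci (\<lambda>n. X n \<omega>) (\<lambda>n. Y n \<omega>) (\<lambda>n. Z n \<omega>) N \<delta> y xt (\<Sum>z\<in>UNIV. q y xt z * \<pi> z)}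
    \<subseteq> (\<Union>z. freq_deviation \<delta> z) \<union> (\<Union>z. \<Union>k\<in>{1..N}. outcome_deviation \<delta> xt y z k)"
proof (intro subsetI, elim CollectE conjE)
  fix \<omega>
  let ?xs = "\<lambda>n. X n \<omega>" and ?ys = "\<lambda>n. Y n \<omega>" and ?zs = "\<lambda>n. Z n \<omega>"
  assume \<omega>: "\<omega> \<in> space M" and "\<not> in_ci ?xs ?ys ?zs N \<delta> y xt (\<Sum>z\<in>UNIV. q y xt z * \<pi> z)"
  then consider
      (freq) z where "freq_radius CARD('z) N \<delta> < \<bar>phat ?zs N z - \<pi> z\<bar>"
    | (dyadic) z k where "k \<in> {1..N}" "pow2floor (cnt ?xs ?zs N xt z) = 2 ^ k"
        "2 ^ k \<le> cnt ?xs ?zs N xt z"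
        "dyadic_radius CARD('z) \<delta> k < \<bar>pcheck ?xs ?ys ?zs N y xt z - q y xt z\<bar>"
    using not_in_ci_imp_estimate_error[of ?xs ?ys ?zs N \<delta> y xt "\<lambda>z. q y xt z"] q_nonneg q_le_1
    by blast
  then show "\<omega> \<in> (\<Union>z. freq_deviation \<delta> z) \<union> (\<Union>z. \<Union>k\<in>{1..N}. outcome_deviation \<delta> xt y z k)"
  proof cases
    case freq
    then have "\<omega> \<in> freq_deviation \<delta> z"
      using \<omega> assms by (auto simp: freq_deviation_def hist_def path_sum_freq_incr_phat abs_mult)
    then show ?thesis
      by blast
  next
    case dyadic
    then have "\<omega> \<in> outcome_deviation \<delta> xt y z k"
      using \<omega> by (auto simp: outcome_deviation_def hist_def path_sum_outcome_incr_pcheck abs_mult)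
    then show ?thesis
      using \<open>k \<in> {1..N}\<close> by blast
  qed
qed

theorem prob_in_ci_ge:
  assumes "1 \<le> N" "0 < \<delta>" "\<delta> < 1"
  shows "1 - \<delta> \<le> prob {\<omega> \<in> space M.
    in_ci (\<lambda>n. X n \<omega>) (\<lambda>n. Y n \<omega>) (\<lambda>n. Z n \<omega>) N \<delta> y xt (\<Sum>z\<in>UNIV. q y xt z * \<pi> z)}"
    (is "_ \<le> prob ?good")
proof -
  let ?C = "real CARD('z)"
  have "?good \<in> events"
    by (rule sets_hist_determined[OF order_refl], rule in_ci_cong) (simp add: hist_def)
  have "space M - ?good = {\<omega> \<in> space M. \<not> in_ci (\<lambda>n. X n \<omega>) (\<lambda>n. Y n \<omega>) (\<lambda>n. Z n \<omega>) N \<delta> y xt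
      (\<Sum>z\<in>UNIV. q y xt z * \<pi> z)}"
    by blast
  then have "prob (space M - ?good)
      \<le> prob ((\<Union>z. freq_deviation \<delta> z) \<union> (\<Union>z. \<Union>k\<in>{1..N}. outcome_deviation \<delta> xt y z k))"
    using not_in_ci_subset_deviations[OF assms(1)] sets_deviation
    by (intro finite_measure_mono) auto
  also have "\<dots> \<le> (\<Sum>z\<in>UNIV. prob (freq_deviation \<delta> z))
      + (\<Sum>z\<in>UNIV. \<Sum>k\<in>{1..N}. prob (outcome_deviation \<delta> xt y z k))"
    using sets_deviation
    by (intro order.trans[OF measure_Un_le] add_mono measure_UNION_le
        order.trans[OF measure_UNION_le] sum_mono) auto
  also have "\<dots> \<le> (\<Sum>z\<in>(UNIV :: 'z set). \<delta> / (2 * ?C))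
      + (\<Sum>z\<in>(UNIV :: 'z set). \<Sum>k\<in>{1..N}. \<delta> / (3.3 * ?C * (real k)\<^sup>2))"
    using assms by (intro add_mono sum_mono prob_freq_deviation prob_outcome_deviation) auto
  also have "\<dots> = \<delta> / 2 + \<delta> / 3.3 * (\<Sum>k=1..N. 1 / (real k)\<^sup>2)"
    by (simp add: sum_distrib_left field_simps)
  also have "\<dots> \<le> \<delta> / 2 + \<delta> / 3.3 * 1.65"
    using sum_inverse_squares_le[of N] assms by (intro add_left_mono mult_left_mono) auto
  finally have "prob (space M - ?good) \<le> \<delta>"
    by simp
  then show ?thesis
    using prob_compl[OF \<open>?good \<in> events\<close>] by simp
qed

end

theorem theorem3:
  fixes M :: "'w measure"
    and X :: "nat \<Rightarrow> 'w \<Rightarrow> 'x::finite"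
    and Y :: "nat \<Rightarrow> 'w \<Rightarrow> 'y::finite"
    and Z :: "nat \<Rightarrow> 'w \<Rightarrow> 'z::finite"
    and \<pi> :: "'z \<Rightarrow> real"
    and q :: "'y \<Rightarrow> 'x \<Rightarrow> 'z \<Rightarrow> real"
    and N :: nat and \<delta> :: real and xt :: 'x and y :: 'y
  assumes "prob_space M"
    and "N \<ge> 1"
    and measX: "\<And>n. n \<in> {1..N} \<Longrightarrow> X n \<in> M \<rightarrow>\<^sub>M count_space UNIV"
    and measY: "\<And>n. n \<in> {1..N} \<Longrightarrow> Y n \<in> M \<rightarrow>\<^sub>M count_space UNIV"
    and measZ: "\<And>n. n \<in> {1..N} \<Longrightarrow> Z n \<in> M \<rightarrow>\<^sub>M count_space UNIV"
    and pi_nonneg: "\<And>z. \<pi> z \<ge> 0" and pi_sum: "(\<Sum>z\<in>UNIV. \<pi> z) = 1"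
    and q_nonneg: "\<And>y' x z. q y' x z \<ge> 0"
    and q_sum: "\<And>x z. (\<Sum>y'\<in>UNIV. q y' x z) = 1"
    and condZ: "\<And>n hs z. n \<in> {1..N} \<Longrightarrow>
        measure M {\<omega> \<in> space M. map (\<lambda>i. (X i \<omega>, Y i \<omega>, Z i \<omega>)) [1..<n] = hs \<and> Z n \<omega> = z}
        = \<pi> z * measure M {\<omega> \<in> space M. map (\<lambda>i. (X i \<omega>, Y i \<omega>, Z i \<omega>)) [1..<n] = hs}"
    and condY: "\<And>n hs z x y'. n \<in> {1..N} \<Longrightarrow>
        measure M {\<omega> \<in> space M. map (\<lambda>i. (X i \<omega>, Y i \<omega>, Z i \<omega>)) [1..<n] = hs
                                  \<and> Z n \<omega> = z \<and> X n \<omega> = x \<and> Y n \<omega> = y'}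
        = q y' x z * measure M {\<omega> \<in> space M. map (\<lambda>i. (X i \<omega>, Y i \<omega>, Z i \<omega>)) [1..<n] = hs
                                  \<and> Z n \<omega> = z \<and> X n \<omega> = x}"
    and "\<delta> > 0"
  shows "measure M {\<omega> \<in> space M.
           in_ci (\<lambda>n. X n \<omega>) (\<lambda>n. Y n \<omega>) (\<lambda>n. Z n \<omega>) N \<delta> y xt
                 (\<Sum>z\<in>UNIV. q y xt z * \<pi> z)} \<ge> 1 - \<delta>"
proof -
  interpret backdoor_process M X Y Z \<pi> q N
    by (intro backdoor_process.intro backdoor_process_axioms.intro) (fact assms)+
  show ?thesis
  proof (cases "\<delta> < 1")
    case True
    then show ?thesis
      using prob_in_ci_ge[OF \<open>N \<ge> 1\<close> \<open>\<delta> > 0\<close>] by blast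
  next
    case False
    then have "1 - \<delta> \<le> 0"
      by simp
    then show ?thesis
      using measure_nonneg order_trans by blast
  qed
qed

end
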